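(* Let $K$ be a field and $|\cdot|:K\to R$ a tempered multiplicative generalized seminorm. Then $K$ has tiny balls for $|\cdot|$.
   Context: A halo is a commutative unital semiring with a partial order compatible with $+$ and $\cdot$; an aura is a halo whose semiring is a semifield; positive means $0<1$. A generalized seminorm is a map $|\cdot|:A\to R$ into a positive totally ordered aura with $|0|=0,|1|=1$, $|a+b|\le|a|+|b|$, $|ab|\le|a||b|$; multiplicative if $|ab|=|a||b|$; tempered if $R$ has tempered growth: for every non-zero $P\in\mathbb{N}[X]$ and $x\in R$, ($x^n\le P(n)$ for all $n\in\mathbb{N}$) implies $x\le1$. For $x,a\in A$ with $|a|>0$, $B(x,|a|)=\{z:|z-x|<|a|\}$. $|\cdot|$ has tiny balls if for every $a$ with $|a|>0$: there is $a'$ with $|a'|>0$ and $B(0,|a'|)+B(0,|a'|)\subset B(0,|a|)$; for every $x\in A$ there is $c$ with $|c|>0$ and $xB(0,|c|)\subset B(0,|a|)$; there is $a'$ with $|a'|>0$ and $B(0,|a'|)B(0,|a'|)\subset B(0,|a|)$; there is $a'$ with $|a'|>0$ and $-B(0,|a'|)\subset B(0,|a|)$. *)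

theory Defs
  imports "HOL-Computational_Algebra.Polynomial"
begin

text \<open>A halo: commutative unital semiring with a partial order compatible with + and *.
  The semiring structure and the order are taken from the type class; compatibility is stated.\<close>
definition halo_compat :: "('r::{comm_semiring_1, order}) itself \<Rightarrow> bool" where
  "halo_compat _ \<longleftrightarrow> (\<forall>x y z::'r. x \<le> y \<longrightarrow> x + z \<le> y + z \<and> x * z \<le> y * z)"

definition aura :: "('r::{comm_semiring_1, order}) itself \<Rightarrow> bool" where
  "aura T \<longleftrightarrow> halo_compat T \<and> (\<forall>x::'r. x \<noteq> 0 \<longrightarrow> (\<exists>y. x * y = 1))"

definition pos_tot_aura :: "('r::{comm_semiring_1, linorder}) itself \<Rightarrow> bool" where
  "pos_tot_aura T \<longleftrightarrow> aura T \<and> (0::'r) < 1"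

definition tempered_growth :: "('r::{comm_semiring_1, order}) itself \<Rightarrow> bool" where
  "tempered_growth _ \<longleftrightarrow>
     (\<forall>(P::nat poly) (x::'r). P \<noteq> 0 \<longrightarrow>
        (\<forall>n::nat. x ^ n \<le> poly (map_poly of_nat P) (of_nat n)) \<longrightarrow> x \<le> 1)"

definition gen_seminorm :: "('a::comm_ring_1 \<Rightarrow> 'r::{comm_semiring_1, linorder}) \<Rightarrow> bool" where
  "gen_seminorm f \<longleftrightarrow> pos_tot_aura TYPE('r) \<and> f 0 = 0 \<and> f 1 = 1 \<and>
     (\<forall>a b. f (a + b) \<le> f a + f b) \<and> (\<forall>a b. f (a * b) \<le> f a * f b)"

definition multiplicative_gs :: "('a::comm_ring_1 \<Rightarrow> 'r::{comm_semiring_1, linorder}) \<Rightarrow> bool" where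
  "multiplicative_gs f \<longleftrightarrow> gen_seminorm f \<and> (\<forall>a b. f (a * b) = f a * f b)"

definition tempered_gs :: "('a::comm_ring_1 \<Rightarrow> 'r::{comm_semiring_1, linorder}) \<Rightarrow> bool" where
  "tempered_gs f \<longleftrightarrow> gen_seminorm f \<and> tempered_growth TYPE('r)"

definition gs_ball :: "('a::comm_ring_1 \<Rightarrow> 'r::{comm_semiring_1, linorder}) \<Rightarrow> 'a \<Rightarrow> 'a \<Rightarrow> 'a set" where
  "gs_ball f x a = {z. f (z - x) < f a}"

definition tiny_balls :: "('a::comm_ring_1 \<Rightarrow> 'r::{comm_semiring_1, linorder}) \<Rightarrow> bool" where
  "tiny_balls f \<longleftrightarrow> (\<forall>a. 0 < f a \<longrightarrow>
     (\<exists>a'. 0 < f a' \<and> (\<forall>z\<in>gs_ball f 0 a'. \<forall>w\<in>gs_ball f 0 a'. z + w \<in> gs_ball f 0 a)) \<and>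
     (\<forall>x. \<exists>c. 0 < f c \<and> (\<forall>z\<in>gs_ball f 0 c. x * z \<in> gs_ball f 0 a)) \<and>
     (\<exists>a'. 0 < f a' \<and> (\<forall>z\<in>gs_ball f 0 a'. \<forall>w\<in>gs_ball f 0 a'. z * w \<in> gs_ball f 0 a)) \<and>
     (\<exists>a'. 0 < f a' \<and> (\<forall>z\<in>gs_ball f 0 a'. - z \<in> gs_ball f 0 a)))"

end

theory Submission
  imports Defs
begin

text \<open>Multiplicativity makes every non-zero element a unit for the norm, which gives the
  scaling, multiplication and negation conditions directly. The additive condition needs an
  element of norm below \<open>1/2\<close>: if some \<open>|t|\<close> lies strictly between \<open>0\<close> and \<open>1\<close>, then
  \<open>x = |t|\<^sup>-\<^sup>1 > 1\<close>, and tempered growth (applied to the constant polynomial \<open>2\<close>) forces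
  \<open>x\<^sup>n > 2\<close> for some \<open>n\<close>, so \<open>e = t\<^sup>n\<close> satisfies \<open>2|e| < 1\<close> and \<open>B(0,|ea|) + B(0,|ea|) \<subseteq> B(0,|a|)\<close>.
  Otherwise the norm is trivial and every ball of positive radius at most \<open>1\<close> is \<open>{0}\<close>.\<close>

lemma halo_compatD:
  fixes x y z :: "'r::{comm_semiring_1, order}"
  assumes "halo_compat TYPE('r)" and "x \<le> y"
  shows halo_add_right_mono: "x + z \<le> y + z"
    and halo_mult_right_mono: "x * z \<le> y * z"
    and halo_mult_left_mono: "z * x \<le> z * y"
  using assms by (auto simp: halo_compat_def mult.commute[of z])

lemma pos_tot_auraD:
  assumes "pos_tot_aura TYPE('r::{comm_semiring_1, linorder})"
  shows pos_tot_aura_halo_compat: "halo_compat TYPE('r)"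
    and pos_tot_aura_zero_less_one: "(0::'r) < 1"
  using assms by (auto simp: pos_tot_aura_def aura_def)

lemma pos_tot_aura_nonneg:
  assumes "pos_tot_aura TYPE('r::{comm_semiring_1, linorder})"
  shows "0 \<le> (x::'r)"
  using halo_mult_right_mono[OF pos_tot_aura_halo_compat[OF assms]
      less_imp_le[OF pos_tot_aura_zero_less_one[OF assms]], of x]
  by simp

lemma halo_mult_strict_right_mono_unit:
  fixes x y z w :: "'r::{comm_semiring_1, order}"
  assumes "halo_compat TYPE('r)" and "x < y" and "z * w = 1"
  shows "x * z < y * z"
proof -
  have "x * z \<le> y * z"
    using halo_mult_right_mono[OF assms(1)] assms(2) by simp
  moreover have "x * z \<noteq> y * z"
  proof
    assume "x * z = y * z"
    then have "x * z * w = y * z * w" by simp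
    then show False using assms(2,3) by (simp add: mult.assoc)
  qed
  ultimately show ?thesis by simp
qed

lemma halo_square_eq_one:
  fixes u :: "'r::{comm_semiring_1, linorder}"
  assumes "halo_compat TYPE('r)" and "u * u = 1"
  shows "u = 1"
proof (rule linorder_cases[of u 1])
  assume "u < 1"
  then have "u * u \<le> 1 * u"
    using halo_mult_right_mono[OF assms(1) less_imp_le] by blast
  with \<open>u < 1\<close> show ?thesis using assms(2) by simp
next
  assume "1 < u"
  then have "1 * u < u * u"
    by (rule halo_mult_strict_right_mono_unit[OF assms(1) _ assms(2)])
  with \<open>1 < u\<close> show ?thesis using assms(2) by simp
qed

lemma tempered_growth_powers_unbounded:
  fixes x :: "'r::{comm_semiring_1, linorder}"
  assumes "tempered_growth TYPE('r)" and "\<not> x \<le> 1" and "c > 0"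
  shows "\<exists>n. of_nat c < x ^ n"
proof (rule ccontr)
  assume "\<nexists>n. of_nat c < x ^ n"
  then have "\<forall>n::nat. x ^ n \<le> poly (map_poly of_nat [:c:]) (of_nat n)"
    by (simp add: map_poly_pCons not_less)
  with assms(1,3) have "x \<le> 1"
    unfolding tempered_growth_def by (metis pCons_eq_0_iff not_gr0)
  with assms(2) show False ..
qed

lemma gen_seminormD:
  assumes "gen_seminorm (f :: 'a::comm_ring_1 \<Rightarrow> 'r::{comm_semiring_1, linorder})"
  shows gen_seminorm_pos_tot_aura: "pos_tot_aura TYPE('r)"
    and gen_seminorm_zero: "f 0 = 0"
    and gen_seminorm_one: "f 1 = 1"
    and gen_seminorm_triangle: "f (a + b) \<le> f a + f b"
  using assms by (auto simp: gen_seminorm_def)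

lemma multiplicative_gsD:
  assumes "multiplicative_gs (f :: 'a::comm_ring_1 \<Rightarrow> 'r::{comm_semiring_1, linorder})"
  shows multiplicative_gs_gen_seminorm: "gen_seminorm f"
    and multiplicative_gs_mult: "f (a * b) = f a * f b"
  using assms by (auto simp: multiplicative_gs_def)

lemma multiplicative_gs_halo_compat:
  assumes "multiplicative_gs (f :: 'a::comm_ring_1 \<Rightarrow> 'r::{comm_semiring_1, linorder})"
  shows "halo_compat TYPE('r)"
  using pos_tot_aura_halo_compat[OF gen_seminorm_pos_tot_aura[OF
        multiplicative_gs_gen_seminorm[OF assms]]] .

lemma mem_gs_ball_zero [simp]: "z \<in> gs_ball f 0 a \<longleftrightarrow> f z < f a"
  by (simp add: gs_ball_def)

lemma multiplicative_gs_power: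
  assumes "multiplicative_gs f"
  shows "f (t ^ n) = f t ^ n"
  by (induction n)
    (simp_all add: gen_seminorm_one[OF multiplicative_gs_gen_seminorm[OF assms]]
      multiplicative_gs_mult[OF assms])

lemma multiplicative_gs_minus:
  fixes f :: "'a::comm_ring_1 \<Rightarrow> 'r::{comm_semiring_1, linorder}"
  assumes "multiplicative_gs f"
  shows "f (- z) = f z"
proof -
  have gs: "gen_seminorm f" using multiplicative_gs_gen_seminorm[OF assms] .
  have "f (-1) * f (-1) = 1"
    using multiplicative_gs_mult[OF assms, of "-1" "-1"] gen_seminorm_one[OF gs] by simp
  then have "f (-1) = 1"
    by (rule halo_square_eq_one[OF multiplicative_gs_halo_compat[OF assms]])
  then show ?thesis
    using multiplicative_gs_mult[OF assms, of "-1" z] by simp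
qed

lemma multiplicative_gs_inverse:
  fixes f :: "'k::field \<Rightarrow> 'r::{comm_semiring_1, linorder}"
  assumes "multiplicative_gs f" and "x \<noteq> 0"
  shows "f x * f (inverse x) = 1"
  using assms multiplicative_gs_mult[OF assms(1), of x "inverse x", symmetric]
    gen_seminorm_one[OF multiplicative_gs_gen_seminorm[OF assms(1)]]
  by simp

lemma multiplicative_gs_pos_iff:
  fixes f :: "'k::field \<Rightarrow> 'r::{comm_semiring_1, linorder}"
  assumes "multiplicative_gs f"
  shows "0 < f x \<longleftrightarrow> x \<noteq> 0"
proof
  show "x \<noteq> 0" if "0 < f x"
    using that gen_seminorm_zero[OF multiplicative_gs_gen_seminorm[OF assms]] by auto
  show "0 < f x" if "x \<noteq> 0"
  proof -
    have "f x \<noteq> 0" using multiplicative_gs_inverse[OF assms that] by auto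
    then show ?thesis
      using pos_tot_aura_nonneg[OF gen_seminorm_pos_tot_aura[OF
            multiplicative_gs_gen_seminorm[OF assms]], of "f x"] by simp
  qed
qed

lemma multiplicative_gs_trivial:
  fixes f :: "'k::field \<Rightarrow> 'r::{comm_semiring_1, linorder}"
  assumes "multiplicative_gs f" and "\<nexists>t. 0 < f t \<and> f t < 1" and "y \<noteq> 0"
  shows "f y = 1"
proof -
  have compat: "halo_compat TYPE('r)" using multiplicative_gs_halo_compat[OF assms(1)] .
  have inv: "f y * f (inverse y) = 1" using multiplicative_gs_inverse[OF assms(1,3)] .
  have "1 \<le> f y" "1 \<le> f (inverse y)"
    using assms(2,3) multiplicative_gs_pos_iff[OF assms(1), of y]
      multiplicative_gs_pos_iff[OF assms(1), of "inverse y"]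
    by (force simp: not_less)+
  moreover have "f y * 1 \<le> f y * f (inverse y)"
    using halo_mult_left_mono[OF compat \<open>1 \<le> f (inverse y)\<close>] .
  ultimately show ?thesis using inv by simp
qed

lemma multiplicative_gs_small_element:
  fixes f :: "'k::field \<Rightarrow> 'r::{comm_semiring_1, linorder}"
  assumes "tempered_gs f" and "multiplicative_gs f"
    and "0 < f t" and "f t < 1" and "c > 0"
  shows "\<exists>e. e \<noteq> 0 \<and> of_nat c * f e < 1"
proof -
  have compat: "halo_compat TYPE('r)" using multiplicative_gs_halo_compat[OF assms(2)] .
  have t: "t \<noteq> 0" using assms(2,3) multiplicative_gs_pos_iff by blast
  define x where "x = f (inverse t)"
  have tx: "f t * x = 1" unfolding x_def using multiplicative_gs_inverse[OF assms(2) t] .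
  have "\<not> x \<le> 1"
  proof
    assume "x \<le> 1"
    then have "f t * x \<le> f t * 1" by (rule halo_mult_left_mono[OF compat])
    with tx assms(4) show False by simp
  qed
  then obtain n where n: "of_nat c < x ^ n"
    using tempered_growth_powers_unbounded assms(1,5) unfolding tempered_gs_def by blast
  have en: "f (t ^ n) * x ^ n = 1"
    using tx by (simp add: multiplicative_gs_power[OF assms(2)] power_mult_distrib[symmetric])
  have "of_nat c * f (t ^ n) < 1"
  proof (rule ccontr)
    assume "\<not> of_nat c * f (t ^ n) < 1"
    then have "1 * x ^ n \<le> of_nat c * f (t ^ n) * x ^ n"
      by (intro halo_mult_right_mono[OF compat]) (simp add: not_less)
    with en n show False by (simp add: mult.assoc)
  qed
  with t show ?thesis by (metis power_not_zero)
qed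

lemma multiplicative_gs_tiny_ball_add:
  fixes f :: "'k::field \<Rightarrow> 'r::{comm_semiring_1, linorder}"
  assumes "tempered_gs f" and "multiplicative_gs f" and "0 < f a"
  shows "\<exists>a'. 0 < f a' \<and> (\<forall>z\<in>gs_ball f 0 a'. \<forall>w\<in>gs_ball f 0 a'. z + w \<in> gs_ball f 0 a)"
proof (cases "\<exists>t. 0 < f t \<and> f t < 1")
  case True
  have gs: "gen_seminorm f" using multiplicative_gs_gen_seminorm[OF assms(2)] .
  have compat: "halo_compat TYPE('r)" using multiplicative_gs_halo_compat[OF assms(2)] .
  have a: "a \<noteq> 0" using assms(2,3) multiplicative_gs_pos_iff by blast
  obtain e where e: "e \<noteq> 0" "2 * f e < 1"
    using True multiplicative_gs_small_element[OF assms(1,2), of _ 2] by auto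
  show ?thesis
  proof (intro exI conjI ballI)
    show "0 < f (e * a)" using a e multiplicative_gs_pos_iff[OF assms(2)] by simp
    fix z w assume "z \<in> gs_ball f 0 (e * a)" "w \<in> gs_ball f 0 (e * a)"
    then have z: "f z \<le> f e * f a" and w: "f w \<le> f e * f a"
      by (simp_all add: multiplicative_gs_mult[OF assms(2)])
    have "f (z + w) \<le> f z + f w" by (rule gen_seminorm_triangle[OF gs])
    also have "\<dots> \<le> f e * f a + f w" using halo_add_right_mono[OF compat z] .
    also have "\<dots> \<le> f e * f a + f e * f a"
      using halo_add_right_mono[OF compat w, of "f e * f a"] by (simp add: add.commute)
    also have "\<dots> = (2 * f e) * f a" by (simp only: mult_2 distrib_right)
    also have "\<dots> < 1 * f a"
      using halo_mult_strict_right_mono_unit[OF compat e(2) multiplicative_gs_inverse[OF assms(2) a]] .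
    finally show "z + w \<in> gs_ball f 0 a" by simp
  qed
next
  case False
  have ball_trivial: "z = 0" if "f z < f a" for z
    using that multiplicative_gs_trivial[OF assms(2) False] assms(2,3) multiplicative_gs_pos_iff
    by (metis less_irrefl)
  show ?thesis
    using assms(3) ball_trivial
      gen_seminorm_zero[OF multiplicative_gs_gen_seminorm[OF assms(2)]]
    by (intro exI[of _ a]) fastforce
qed

lemma multiplicative_gs_tiny_ball_scale:
  fixes f :: "'k::field \<Rightarrow> 'r::{comm_semiring_1, linorder}"
  assumes "multiplicative_gs f" and "0 < f a"
  shows "\<exists>c. 0 < f c \<and> (\<forall>z\<in>gs_ball f 0 c. x * z \<in> gs_ball f 0 a)"
proof (cases "x = 0")
  case True
  then show ?thesis
    using assms gen_seminorm_zero[OF multiplicative_gs_gen_seminorm[OF assms(1)]] by auto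
next
  case False
  have compat: "halo_compat TYPE('r)" using multiplicative_gs_halo_compat[OF assms(1)] .
  have inv: "f (inverse x) * f x = 1"
    using multiplicative_gs_inverse[OF assms(1) False] by (simp add: mult.commute)
  show ?thesis
  proof (intro exI[of _ "a * inverse x"] conjI ballI)
    show "0 < f (a * inverse x)"
      using assms False multiplicative_gs_pos_iff[OF assms(1)] by simp
    fix z assume "z \<in> gs_ball f 0 (a * inverse x)"
    then have "f z < f a * f (inverse x)" by (simp add: multiplicative_gs_mult[OF assms(1)])
    then have "f z * f x < f a * f (inverse x) * f x"
      using halo_mult_strict_right_mono_unit[OF compat _ inv[unfolded mult.commute[of "f (inverse x)"]]]
      by blast
    then show "x * z \<in> gs_ball f 0 a"
      using inv by (simp add: multiplicative_gs_mult[OF assms(1)] ac_simps)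
  qed
qed

lemma multiplicative_gs_tiny_ball_mult:
  fixes f :: "'k::field \<Rightarrow> 'r::{comm_semiring_1, linorder}"
  assumes "multiplicative_gs f" and "0 < f a"
  shows "\<exists>a'. 0 < f a' \<and> (\<forall>z\<in>gs_ball f 0 a'. \<forall>w\<in>gs_ball f 0 a'. z * w \<in> gs_ball f 0 a)"
proof -
  have gs: "gen_seminorm f" using multiplicative_gs_gen_seminorm[OF assms(1)] .
  have compat: "halo_compat TYPE('r)" using multiplicative_gs_halo_compat[OF assms(1)] .
  have mult: "f (z * w) = f z * f w" for z w using multiplicative_gs_mult[OF assms(1)] .
  show ?thesis
  proof (cases "f a \<le> 1")
    case True
    have inv: "f a * f (inverse a) = 1"
      using multiplicative_gs_inverse[OF assms(1)] assms multiplicative_gs_pos_iff by blast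
    show ?thesis
    proof (intro exI[of _ a] conjI ballI)
      fix z w assume "z \<in> gs_ball f 0 a" "w \<in> gs_ball f 0 a"
      then have z: "f z < f a" and w: "f w < f a" by simp_all
      have "f (z * w) \<le> f z * f a"
        using halo_mult_left_mono[OF compat less_imp_le[OF w]] by (simp add: mult)
      also have "\<dots> < f a * f a" using halo_mult_strict_right_mono_unit[OF compat z inv] .
      also have "\<dots> \<le> f a * 1" using halo_mult_left_mono[OF compat True] .
      finally show "z * w \<in> gs_ball f 0 a" by simp
    qed (use assms in simp)
  next
    case False
    show ?thesis
    proof (intro exI[of _ 1] conjI ballI)
      show "0 < f 1"
        using gen_seminorm_one[OF gs] pos_tot_aura_zero_less_one[OF gen_seminorm_pos_tot_aura[OF gs]]
        by simp
      fix z w assume "z \<in> gs_ball f 0 1" "w \<in> gs_ball f 0 1"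
      then have z: "f z < 1" and w: "f w < 1" using gen_seminorm_one[OF gs] by simp_all
      have "f (z * w) \<le> f z * 1"
        using halo_mult_left_mono[OF compat less_imp_le[OF w]] by (simp add: mult)
      also have "\<dots> < f a" using z False by simp
      finally show "z * w \<in> gs_ball f 0 a" by simp
    qed
  qed
qed

theorem corollary4p8:
  fixes f :: "'k::field \<Rightarrow> 'r::{comm_semiring_1, linorder}"
  assumes "tempered_gs f" and "multiplicative_gs f"
  shows "tiny_balls f"
  unfolding tiny_balls_def
proof (intro allI impI conjI)
  fix a :: 'k assume a: "0 < f a"
  show "\<exists>a'. 0 < f a' \<and> (\<forall>z\<in>gs_ball f 0 a'. \<forall>w\<in>gs_ball f 0 a'. z + w \<in> gs_ball f 0 a)"
    using multiplicative_gs_tiny_ball_add[OF assms a] .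
  show "\<exists>c. 0 < f c \<and> (\<forall>z\<in>gs_ball f 0 c. x * z \<in> gs_ball f 0 a)" for x
    using multiplicative_gs_tiny_ball_scale[OF assms(2) a] .
  show "\<exists>a'. 0 < f a' \<and> (\<forall>z\<in>gs_ball f 0 a'. \<forall>w\<in>gs_ball f 0 a'. z * w \<in> gs_ball f 0 a)"
    using multiplicative_gs_tiny_ball_mult[OF assms(2) a] .
  show "\<exists>a'. 0 < f a' \<and> (\<forall>z\<in>gs_ball f 0 a'. - z \<in> gs_ball f 0 a)"
    using a by (intro exI[of _ a]) (simp add: multiplicative_gs_minus[OF assms(2)])
qed

end
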